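(* Let $T$ be an order tree of height at most $\omega_1$, $G$ a sparse $T$-graph, $H=G\sharp\mathbb{N}$ its ray inflation, and $0\le i<\omega_1$. Then the map $t\mapsto H[\lfloor t\rfloor\times\mathbb{N}]$, where $\lfloor t\rfloor=\{t'\in T : t\le t'\}$, is a bijection between the level $T^i$ and the set of components of $H-(T^{<i}\times\mathbb{N})$.
   Context: An order tree is a partial order $(T,\le)$ with a unique minimal element (the root) in which every set $\{t' : t'\le t\}$ is well-ordered; the height of $t$ is the order type of $\{t' : t'<t\}$; $T^i$ is the set of points of height $i$ and $T^{<i}=\bigcup_{j<i}T^j$; the height of $T$ is the supremum of the order types of its maximal chains. $t$ is a successor of $t'$ (its predecessor) if $t'<t$ with nothing strictly between; otherwise $t$ is a limit. A $T$-graph is a graph $G$ with $V(G)=T$ whose edges join comparable points and in which for every $t$ the neighbours of $t$ below $t$ (its down-neighbours) are cofinal in $\{s : s<t\}$. $G$ is sparse if the set of down-neighbours of each $t$ has order type $\mathrm{cf}(\{s : s<t\})$; for height at most $\omega_1$, this means a successor's only down-neighbour is its predecessor and a non-root limit's down-neighbours form a cofinal $\omega$-sequence below it. The ray inflation $G\sharp\mathbb{N}$ has vertex set $T\times\mathbb{N}$ and edges: $(t,n)(t,n+1)$ for all $t,n$; $(t,n)(t',n)$ for all $n$ if $t$ is a successor with predecessor $t'$; $(t,n)(t_n,n)$ for all $n$ if $t$ is a non-root limit with down-neighbours $t_0<t_1<\cdots$. $H[X]$ denotes the induced subgraph on $X$. *)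

theory Defs
  imports Main
begin

definition down :: "'a rel \<Rightarrow> 'a \<Rightarrow> 'a set" where
  "down le t = {s. (s, t) \<in> le}"

definition sdown :: "'a rel \<Rightarrow> 'a \<Rightarrow> 'a set" where
  "sdown le t = {s. (s, t) \<in> le \<and> s \<noteq> t}"

definition up :: "'a rel \<Rightarrow> 'a \<Rightarrow> 'a set" where
  "up le t = {s. (t, s) \<in> le}"

definition order_tree :: "'a set \<Rightarrow> 'a rel \<Rightarrow> bool" where
  "order_tree T le \<longleftrightarrow>
     le \<subseteq> T \<times> T \<and> refl_on T le \<and> antisym le \<and> trans le \<and>
     (\<exists>!r. r \<in> T \<and> (\<forall>t\<in>T. (t, r) \<in> le \<longrightarrow> t = r)) \<and>
     (\<forall>t\<in>T. Well_order (Restr le (down le t)))"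

definition is_chain :: "'a set \<Rightarrow> 'a rel \<Rightarrow> 'a set \<Rightarrow> bool" where
  "is_chain T le C \<longleftrightarrow> C \<subseteq> T \<and> (\<forall>x\<in>C. \<forall>y\<in>C. (x, y) \<in> le \<or> (y, x) \<in> le)"

definition maximal_chain :: "'a set \<Rightarrow> 'a rel \<Rightarrow> 'a set \<Rightarrow> bool" where
  "maximal_chain T le C \<longleftrightarrow> is_chain T le C \<and> (\<forall>D. is_chain T le D \<and> C \<subseteq> D \<longrightarrow> D = C)"

text \<open>Height of T at most omega_1: every maximal chain has order type at most omega_1
  (the supremum of these order types is at most omega_1 iff each one is).
  omega_1 is represented by the well-order cardSuc natLeq.\<close>

definition height_le_omega1 :: "'a set \<Rightarrow> 'a rel \<Rightarrow> bool" where
  "height_le_omega1 T le \<longleftrightarrow>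
     (\<forall>C. maximal_chain T le C \<longrightarrow> (Restr le C, cardSuc natLeq) \<in> ordLeq)"

text \<open>Levels: the ordinal i is given by a well-order relation; the height of t is the
  order type of its strict down-set.\<close>

definition level :: "'a set \<Rightarrow> 'a rel \<Rightarrow> 'b rel \<Rightarrow> 'a set" where
  "level T le i = {t \<in> T. (Restr le (sdown le t), i) \<in> ordIso}"

definition below_level :: "'a set \<Rightarrow> 'a rel \<Rightarrow> 'b rel \<Rightarrow> 'a set" where
  "below_level T le i = {t \<in> T. (Restr le (sdown le t), i) \<in> ordLess}"

definition is_root :: "'a set \<Rightarrow> 'a rel \<Rightarrow> 'a \<Rightarrow> bool" where
  "is_root T le t \<longleftrightarrow> t \<in> T \<and> (\<forall>s\<in>T. (s, t) \<in> le \<longrightarrow> s = t)"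

definition is_pred :: "'a set \<Rightarrow> 'a rel \<Rightarrow> 'a \<Rightarrow> 'a \<Rightarrow> bool" where
  "is_pred T le t' t \<longleftrightarrow> t' \<in> T \<and> t \<in> T \<and> t' \<in> sdown le t \<and>
     \<not> (\<exists>s\<in>T. s \<in> sdown le t \<and> t' \<in> sdown le s)"

definition is_successor :: "'a set \<Rightarrow> 'a rel \<Rightarrow> 'a \<Rightarrow> bool" where
  "is_successor T le t \<longleftrightarrow> (\<exists>t'. is_pred T le t' t)"

definition pred_of :: "'a set \<Rightarrow> 'a rel \<Rightarrow> 'a \<Rightarrow> 'a" where
  "pred_of T le t = (THE t'. is_pred T le t' t)"

definition is_graph :: "'v set \<Rightarrow> 'v rel \<Rightarrow> bool" where
  "is_graph V E \<longleftrightarrow> E \<subseteq> V \<times> V \<and> sym E \<and> irrefl E"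

definition down_nbrs :: "'a rel \<Rightarrow> 'a rel \<Rightarrow> 'a \<Rightarrow> 'a set" where
  "down_nbrs le E t = {s. (s, t) \<in> E \<and> s \<in> sdown le t}"

definition T_graph :: "'a set \<Rightarrow> 'a rel \<Rightarrow> 'a rel \<Rightarrow> bool" where
  "T_graph T le E \<longleftrightarrow> is_graph T E \<and>
     (\<forall>(x, y)\<in>E. (x, y) \<in> le \<or> (y, x) \<in> le) \<and>
     (\<forall>t\<in>T. \<forall>s\<in>sdown le t. \<exists>u\<in>down_nbrs le E t. (s, u) \<in> le)"

text \<open>Sparse T-graph, in the form stated for trees of height at most omega_1:
  a successor's only down-neighbour is its predecessor, and the down-neighbours of a
  non-root limit form a (cofinal) omega-sequence, i.e. have order type omega (natLeq).\<close>

definition sparse :: "'a set \<Rightarrow> 'a rel \<Rightarrow> 'a rel \<Rightarrow> bool" where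
  "sparse T le E \<longleftrightarrow> T_graph T le E \<and>
     (\<forall>t\<in>T. is_successor T le t \<longrightarrow> down_nbrs le E t = {pred_of T le t}) \<and>
     (\<forall>t\<in>T. \<not> is_successor T le t \<and> \<not> is_root T le t \<longrightarrow>
        (Restr le (down_nbrs le E t), natLeq) \<in> ordIso)"

text \<open>The n-th down-neighbour t_n (counting from 0) of a limit t: the one with exactly n
  down-neighbours strictly below it.\<close>

definition nth_dn :: "'a rel \<Rightarrow> 'a rel \<Rightarrow> 'a \<Rightarrow> nat \<Rightarrow> 'a" where
  "nth_dn le E t n = (THE s. s \<in> down_nbrs le E t \<and>
      card {s' \<in> down_nbrs le E t. s' \<in> sdown le s} = n)"

definition ray_edges0 :: "'a set \<Rightarrow> 'a rel \<Rightarrow> 'a rel \<Rightarrow> ('a \<times> nat) rel" where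
  "ray_edges0 T le E =
     {((t, n), (t, Suc n)) | t n. t \<in> T} \<union>
     {((t, n), (pred_of T le t, n)) | t n. t \<in> T \<and> is_successor T le t} \<union>
     {((t, n), (nth_dn le E t n, n)) | t n. t \<in> T \<and> \<not> is_successor T le t \<and> \<not> is_root T le t}"

definition ray_inflation :: "'a set \<Rightarrow> 'a rel \<Rightarrow> 'a rel \<Rightarrow> ('a \<times> nat) set \<times> ('a \<times> nat) rel" where
  "ray_inflation T le E = (T \<times> UNIV, ray_edges0 T le E \<union> (ray_edges0 T le E)\<inverse>)"

definition induced :: "'v set \<times> 'v rel \<Rightarrow> 'v set \<Rightarrow> 'v set \<times> 'v rel" where
  "induced G X = (fst G \<inter> X, snd G \<inter> ((fst G \<inter> X) \<times> (fst G \<inter> X)))"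

definition delete :: "'v set \<times> 'v rel \<Rightarrow> 'v set \<Rightarrow> 'v set \<times> 'v rel" where
  "delete G X = induced G (fst G - X)"

definition components :: "'v set \<times> 'v rel \<Rightarrow> ('v set \<times> 'v rel) set" where
  "components G = {induced G C | C. \<exists>v\<in>fst G.
      C = {w \<in> fst G. (v, w) \<in> (snd G \<inter> (fst G \<times> fst G))\<^sup>*}}"

end

theory Submission
  imports Defs
begin

(* Fix t of height i and write \<lfloor>t\<rfloor> for its up-set. Inside H[\<lfloor>t\<rfloor> \<times> \<nat>] every row
  {s} \<times> \<nat> is a ray, and (s, 0) is joined to (t, 0) by well-founded induction on s: a successor s
  is adjacent to its predecessor, and a limit s has a down-neighbour t_n above t, with
  (s, n) adjacent to (t_n, n). Conversely, every edge of H stays in a row or joins (s, n) to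
  a point (s', n) with s' < s; leaving \<lfloor>t\<rfloor> \<times> \<nat> therefore means reaching a point strictly
  below t, which has height less than i. Since every point of height at least i lies above a
  point of T^i, the sets \<lfloor>t\<rfloor> \<times> \<nat> with t \<in> T^i partition H - (T^{<i} \<times> \<nat>)
  into its components. *)

lemma fst_delete: "fst (delete G X) = fst G - X"
  unfolding delete_def induced_def by auto

lemma snd_delete: "snd (delete G X) = Restr (snd G) (fst G - X)"
  unfolding delete_def induced_def by auto

lemma induced_delete:
  assumes "X \<subseteq> fst G - Y"
  shows "induced (delete G Y) X = induced G X"
  using assms unfolding delete_def induced_def by auto

lemma bij_betw_components:
  fixes G :: "'v set \<times> 'v rel" and C :: "'i \<Rightarrow> 'v set"
  assumes cover: "fst G = (\<Union>t\<in>I. C t)"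
    and nonempty: "\<And>t. t \<in> I \<Longrightarrow> C t \<noteq> {}"
    and closed:
      "\<And>t x y. t \<in> I \<Longrightarrow> x \<in> C t \<Longrightarrow> (x, y) \<in> Restr (snd G) (fst G) \<Longrightarrow> y \<in> C t"
    and connected:
      "\<And>t x y. t \<in> I \<Longrightarrow> x \<in> C t \<Longrightarrow> y \<in> C t \<Longrightarrow> (x, y) \<in> (Restr (snd G) (fst G))\<^sup>*"
    and inj: "inj_on C I"
  shows "bij_betw (\<lambda>t. induced G (C t)) I (components G)"
proof -
  let ?R = "Restr (snd G) (fst G)"
  have component: "{w \<in> fst G. (v, w) \<in> ?R\<^sup>*} = C t" if t: "t \<in> I" and v: "v \<in> C t" for t v
  proof
    have "w \<in> C t" if "(v, w) \<in> ?R\<^sup>*" for w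
      using that by induction (use v closed[OF t] in blast)+
    then show "{w \<in> fst G. (v, w) \<in> ?R\<^sup>*} \<subseteq> C t" by blast
    show "C t \<subseteq> {w \<in> fst G. (v, w) \<in> ?R\<^sup>*}"
      using connected[OF t v] cover t by blast
  qed
  have vertices_induced: "fst (induced G (C t)) = C t" if "t \<in> I" for t
    using that cover unfolding induced_def by auto
  have "inj_on (\<lambda>t. induced G (C t)) I"
  proof (rule inj_onI)
    fix t t' assume "t \<in> I" "t' \<in> I" and "induced G (C t) = induced G (C t')"
    then have "C t = C t'" using vertices_induced by metis
    with inj show "t = t'" using \<open>t \<in> I\<close> \<open>t' \<in> I\<close> by (rule inj_onD)
  qed
  moreover have "(\<lambda>t. induced G (C t)) ` I = components G"
  proof (intro equalityI subsetI)
    fix X assume "X \<in> (\<lambda>t. induced G (C t)) ` I"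
    then obtain t v where "t \<in> I" "v \<in> C t" "X = induced G (C t)"
      using nonempty by blast
    then show "X \<in> components G"
      using component cover unfolding components_def by blast
  next
    fix X assume "X \<in> components G"
    then obtain v where "v \<in> fst G" "X = induced G {w \<in> fst G. (v, w) \<in> ?R\<^sup>*}"
      unfolding components_def by blast
    then show "X \<in> (\<lambda>t. induced G (C t)) ` I"
      using component cover by auto
  qed
  ultimately show ?thesis
    unfolding bij_betw_def by blast
qed

locale tree =
  fixes T :: "'a set" and le :: "'a rel"
  assumes order_tree: "order_tree T le"
begin

lemma tree_le_carrier: "(a, b) \<in> le \<Longrightarrow> a \<in> T \<and> b \<in> T"
  using order_tree unfolding order_tree_def by blast

lemma tree_refl: "a \<in> T \<Longrightarrow> (a, a) \<in> le"
  using order_tree unfolding order_tree_def refl_on_def by blast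

lemma tree_trans: "(a, b) \<in> le \<Longrightarrow> (b, c) \<in> le \<Longrightarrow> (a, c) \<in> le"
  using order_tree unfolding order_tree_def trans_def by blast

lemma tree_antisym: "(a, b) \<in> le \<Longrightarrow> (b, a) \<in> le \<Longrightarrow> a = b"
  using order_tree unfolding order_tree_def antisym_def by blast

lemma up_subset_carrier: "up le t \<subseteq> T"
  unfolding up_def using tree_le_carrier by blast

lemma Field_Restr: "A \<subseteq> T \<Longrightarrow> Field (Restr le A) = A"
  unfolding Field_def using tree_refl by blast

lemma Well_order_down: "s \<in> T \<Longrightarrow> Well_order (Restr le (down le s))"
  using order_tree unfolding order_tree_def by blast

lemma Well_order_sdown: "s \<in> T \<Longrightarrow> Well_order (Restr le (sdown le s))"
proof -
  assume "s \<in> T"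
  have "Restr le (sdown le s) = Restr (Restr le (down le s)) (sdown le s)"
    unfolding sdown_def down_def by auto
  then show ?thesis
    using Well_order_Restr[OF Well_order_down[OF \<open>s \<in> T\<close>]] by simp
qed

lemma comparable_below_common:
  assumes "(a, s) \<in> le" and "(b, s) \<in> le"
  shows "(a, b) \<in> le \<or> (b, a) \<in> le"
proof -
  have "s \<in> T" "a \<in> T" using assms tree_le_carrier by blast+
  have "down le s \<subseteq> T"
    unfolding down_def using tree_le_carrier by blast
  then have "well_order_on (down le s) (Restr le (down le s))"
    using Well_order_down[OF \<open>s \<in> T\<close>] Field_Restr by simp
  then have "total_on (down le s) (Restr le (down le s))"
    by (simp add: well_order_on_def linear_order_on_def)
  moreover have "a \<in> down le s" "b \<in> down le s"
    using assms unfolding down_def by auto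
  ultimately show ?thesis
    using tree_refl[OF \<open>a \<in> T\<close>] by (cases "a = b") (auto simp: total_on_def)
qed

lemma wf_sdown: "wf {(a, b). a \<in> sdown le b}"
  unfolding wf_eq_minimal
proof (intro allI impI)
  fix Q and x :: 'a
  assume "x \<in> Q"
  show "\<exists>z\<in>Q. \<forall>y. (y, z) \<in> {(a, b). a \<in> sdown le b} \<longrightarrow> y \<notin> Q"
  proof (cases "x \<in> T")
    case False
    then show ?thesis
      using \<open>x \<in> Q\<close> tree_le_carrier unfolding sdown_def by blast
  next
    case True
    have "wf (Restr le (down le x) - Id)"
      using Well_order_down[OF True] unfolding well_order_on_def by blast
    moreover have "x \<in> Q \<inter> down le x"
      using \<open>x \<in> Q\<close> tree_refl[OF True] unfolding down_def by blast
    ultimately obtain z where z: "z \<in> Q \<inter> down le x"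
      and minimal: "\<forall>y. (y, z) \<in> Restr le (down le x) - Id \<longrightarrow> y \<notin> Q \<inter> down le x"
      unfolding wf_eq_minimal by metis
    have "y \<notin> Q" if "y \<in> sdown le z" for y
      using that z minimal tree_trans unfolding sdown_def down_def by blast
    with z show ?thesis by blast
  qed
qed

lemma Field_Restr_sdown: "Field (Restr le (sdown le s)) = sdown le s"
  by (rule Field_Restr) (auto simp: sdown_def dest: tree_le_carrier)

lemma Restr_underS_sdown:
  assumes "a \<in> sdown le s"
  shows "Restr (Restr le (sdown le s)) (underS (Restr le (sdown le s)) a) = Restr le (sdown le a)"
proof -
  have "underS (Restr le (sdown le s)) a = sdown le a"
    using assms unfolding underS_def sdown_def by (auto dest: tree_trans tree_antisym)
  moreover have "Restr (Restr le (sdown le s)) (sdown le a) = Restr le (sdown le a)"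
    using assms unfolding sdown_def by (auto dest: tree_trans tree_antisym)
  ultimately show ?thesis by simp
qed

lemma height_less:
  assumes "t \<in> sdown le s"
  shows "(Restr le (sdown le t), Restr le (sdown le s)) \<in> ordLess"
proof -
  have "s \<in> T" "t \<in> T"
    using assms tree_le_carrier unfolding sdown_def by auto
  have "(Restr le (sdown le t),
      Restr (Restr le (sdown le s)) (underS (Restr le (sdown le s)) t)) \<in> ordIso"
    unfolding Restr_underS_sdown[OF assms]
    using ordIso_reflexive[OF Well_order_sdown[OF \<open>t \<in> T\<close>]] .
  then show ?thesis
    using ordLess_iff_ordIso_Restr[OF Well_order_sdown[OF \<open>s \<in> T\<close>] Well_order_sdown[OF \<open>t \<in> T\<close>]]
      Field_Restr_sdown assms by blast
qed

lemma sdown_subset_below_level: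
  assumes "t \<in> level T le i"
  shows "sdown le t \<subseteq> below_level T le i"
proof
  fix s assume "s \<in> sdown le t"
  then have "(Restr le (sdown le s), i) \<in> ordLess"
    using height_less assms ordLess_ordIso_trans unfolding level_def by blast
  then show "s \<in> below_level T le i"
    using \<open>s \<in> sdown le t\<close> tree_le_carrier unfolding below_level_def sdown_def by blast
qed

lemma up_level_disjoint_below_level:
  assumes "t \<in> level T le i"
  shows "up le t \<inter> below_level T le i = {}"
proof -
  have "(Restr le (sdown le s), i) \<notin> ordLess" if "(t, s) \<in> le" for s
  proof (cases "s = t")
    case True
    then show ?thesis
      using assms not_ordLess_ordIso unfolding level_def by blast
  next
    case False
    then have "(i, Restr le (sdown le s)) \<in> ordLess"
      using that assms height_less ordIso_ordLess_trans ordIso_symmetric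
      unfolding level_def sdown_def by blast
    then show ?thesis
      using not_ordLess_ordLeq ordLess_imp_ordLeq by blast
  qed
  then show ?thesis
    unfolding up_def below_level_def by blast
qed

lemma level_below:
  assumes "Well_order i" and "s \<in> T" and "s \<notin> below_level T le i"
  shows "\<exists>t\<in>level T le i. (t, s) \<in> le"
proof -
  have W: "Well_order (Restr le (sdown le s))"
    using Well_order_sdown[OF \<open>s \<in> T\<close>] .
  have "(i, Restr le (sdown le s)) \<in> ordLess \<or> (i, Restr le (sdown le s)) \<in> ordIso"
    using assms ordLess_or_ordLeq[OF W \<open>Well_order i\<close>] ordLeq_iff_ordLess_or_ordIso
    unfolding below_level_def by blast
  then show ?thesis
  proof
    assume "(i, Restr le (sdown le s)) \<in> ordIso"
    then show ?thesis
      using \<open>s \<in> T\<close> tree_refl ordIso_symmetric unfolding level_def by blast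
  next
    assume "(i, Restr le (sdown le s)) \<in> ordLess"
    then obtain a where a: "a \<in> sdown le s"
      and "(i, Restr (Restr le (sdown le s)) (underS (Restr le (sdown le s)) a)) \<in> ordIso"
      using ordLess_iff_ordIso_Restr[OF W \<open>Well_order i\<close>] Field_Restr_sdown by blast
    then have "(Restr le (sdown le a), i) \<in> ordIso"
      unfolding Restr_underS_sdown[OF a] using ordIso_symmetric by blast
    then show ?thesis
      using a tree_le_carrier unfolding level_def sdown_def by blast
  qed
qed

lemma carrier_Diff_below_level:
  assumes "Well_order i"
  shows "T - below_level T le i = (\<Union>t\<in>level T le i. up le t)"
proof (intro equalityI subsetI)
  fix s assume "s \<in> T - below_level T le i"
  then show "s \<in> (\<Union>t\<in>level T le i. up le t)"
    using level_below[OF assms] unfolding up_def by blast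
next
  fix s assume "s \<in> (\<Union>t\<in>level T le i. up le t)"
  then obtain t where "t \<in> level T le i" "s \<in> up le t" by blast
  then show "s \<in> T - below_level T le i"
    using up_level_disjoint_below_level up_subset_carrier by blast
qed

lemma pred_of_is_pred:
  assumes "is_successor T le t"
  shows "is_pred T le (pred_of T le t) t"
proof -
  obtain p where p: "is_pred T le p t"
    using assms unfolding is_successor_def by blast
  have "p' = p" if p': "is_pred T le p' t" for p'
    using comparable_below_common[of p t p'] p p' unfolding is_pred_def sdown_def by blast
  then have "pred_of T le t = p"
    unfolding pred_of_def using p by blast
  with p show ?thesis by simp
qed

end

lemma bij_betw_omega_enumeration:
  assumes field: "Field (Restr r D) = D" and omega: "(Restr r D, natLeq) \<in> ordIso"
  shows "bij_betw (\<lambda>n. THE s. s \<in> D \<and> card {s' \<in> D. s' \<in> sdown r s} = n) UNIV D"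
proof -
  obtain f where "iso (Restr r D) natLeq f"
    using omega unfolding ordIso_def by blast
  then have f: "bij_betw f D UNIV"
    and f_le_iff: "\<And>a b. a \<in> D \<Longrightarrow> b \<in> D \<Longrightarrow> (a, b) \<in> r \<longleftrightarrow> f a \<le> f b"
    unfolding iso_iff2 field Field_natLeq by (auto simp: natLeq_def)
  have rank: "card {s' \<in> D. s' \<in> sdown r s} = f s" if "s \<in> D" for s
  proof -
    have inj: "inj_on f D"
      using f unfolding bij_betw_def by blast
    have "f ` {s' \<in> D. s' \<in> sdown r s} = {..<f s}"
    proof (intro equalityI subsetI)
      fix k assume "k \<in> f ` {s' \<in> D. s' \<in> sdown r s}"
      then obtain s' where "s' \<in> D" "(s', s) \<in> r" "s' \<noteq> s" and k: "k = f s'"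
        unfolding sdown_def by blast
      then have "f s' \<le> f s" and "f s' \<noteq> f s"
        using f_le_iff[OF \<open>s' \<in> D\<close> \<open>s \<in> D\<close>] inj_onD[OF inj _ \<open>s' \<in> D\<close> \<open>s \<in> D\<close>] by auto
      with k show "k \<in> {..<f s}" by simp
    next
      fix k assume "k \<in> {..<f s}"
      moreover obtain s' where "s' \<in> D" "k = f s'"
        using f unfolding bij_betw_def by blast
      ultimately show "k \<in> f ` {s' \<in> D. s' \<in> sdown r s}"
        using f_le_iff[OF _ \<open>s \<in> D\<close>] unfolding sdown_def by fastforce
    qed
    moreover have "inj_on f {s' \<in> D. s' \<in> sdown r s}"
      using inj by (rule inj_on_subset) blast
    ultimately show ?thesis
      using card_image by fastforce
  qed
  have "(THE s. s \<in> D \<and> card {s' \<in> D. s' \<in> sdown r s} = n) = inv_into D f n" for n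
  proof (rule the_equality)
    show "inv_into D f n \<in> D \<and> card {s' \<in> D. s' \<in> sdown r (inv_into D f n)} = n"
      using f rank by (metis bij_betw_def bij_betw_inv_into_right inv_into_into UNIV_I)
  next
    fix s assume "s \<in> D \<and> card {s' \<in> D. s' \<in> sdown r s} = n"
    then show "s = inv_into D f n"
      using f rank by (metis bij_betw_inv_into_left)
  qed
  then show ?thesis
    using bij_betw_inv_into[OF f] by simp
qed

locale sparse_tree = tree +
  fixes E :: "'a rel"
  assumes sparse: "sparse T le E"
begin

abbreviation H :: "('a \<times> nat) set \<times> ('a \<times> nat) rel"
  where "H \<equiv> ray_inflation T le E"

abbreviation cone :: "'a \<Rightarrow> ('a \<times> nat) set"
  where "cone t \<equiv> up le t \<times> UNIV"

lemma nth_dn_bij: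
  assumes "t \<in> T" and "\<not> is_successor T le t" and "\<not> is_root T le t"
  shows "bij_betw (nth_dn le E t) UNIV (down_nbrs le E t)"
proof -
  have "Field (Restr le (down_nbrs le E t)) = down_nbrs le E t"
    by (rule Field_Restr) (auto simp: down_nbrs_def sdown_def dest: tree_le_carrier)
  moreover have "(Restr le (down_nbrs le E t), natLeq) \<in> ordIso"
    using sparse assms unfolding sparse_def by blast
  ultimately show ?thesis
    unfolding nth_dn_def[abs_def] by (rule bij_betw_omega_enumeration)
qed

lemma ray_edges0_cases:
  assumes "(x, y) \<in> ray_edges0 T le E"
  shows "fst x \<in> T \<and> (y = (fst x, Suc (snd x)) \<or> snd y = snd x \<and> fst y \<in> sdown le (fst x))"
  using assms unfolding ray_edges0_def
proof (elim UnE CollectE exE conjE)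
  fix t n
  assume "(x, y) = ((t, n), pred_of T le t, n)" "t \<in> T" "is_successor T le t"
  then show ?thesis
    using pred_of_is_pred unfolding is_pred_def by auto
next
  fix t n
  assume "(x, y) = ((t, n), nth_dn le E t n, n)" "t \<in> T"
    and "\<not> is_successor T le t" "\<not> is_root T le t"
  then show ?thesis
    using bij_betwE[OF nth_dn_bij] unfolding down_nbrs_def by auto
qed auto

lemma ray_edge_sym: "(x, y) \<in> snd H \<Longrightarrow> (y, x) \<in> snd H"
  unfolding ray_inflation_def by auto

lemma ray_edge_leaving_cone:
  assumes "x \<in> cone t" and "(x, y) \<in> snd H" and "fst y \<notin> sdown le t"
  shows "y \<in> cone t"
proof -
  have t_le_x: "(t, fst x) \<in> le"
    using assms(1) unfolding up_def by auto
  from assms(2) consider "(x, y) \<in> ray_edges0 T le E" | "(y, x) \<in> ray_edges0 T le E"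
    unfolding ray_inflation_def by auto
  then show ?thesis
  proof cases
    case 1
    then consider "y = (fst x, Suc (snd x))" | "fst y \<in> sdown le (fst x)"
      using ray_edges0_cases by blast
    then show ?thesis
    proof cases
      case 2
      then have "(t, fst y) \<in> le \<or> (fst y, t) \<in> le"
        using comparable_below_common t_le_x unfolding sdown_def by blast
      then have "(t, fst y) \<in> le"
        using assms(3) tree_refl tree_le_carrier t_le_x unfolding sdown_def by blast
      then show ?thesis
        unfolding up_def by (cases y) auto
    qed (use t_le_x in \<open>auto simp: up_def\<close>)
  next
    case 2
    then have "(fst x, fst y) \<in> le"
      using ray_edges0_cases[OF 2] tree_refl unfolding sdown_def by auto
    then show ?thesis
      using t_le_x tree_trans unfolding up_def by (cases y) auto
  qed
qed

lemma ray_edge_vertical: "s \<in> T \<Longrightarrow> ((s, n), (s, Suc n)) \<in> snd H"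
  unfolding ray_inflation_def ray_edges0_def snd_conv by blast

lemma ray_edge_pred: "s \<in> T \<Longrightarrow> is_successor T le s \<Longrightarrow> ((s, n), (pred_of T le s, n)) \<in> snd H"
  unfolding ray_inflation_def ray_edges0_def snd_conv by blast

lemma ray_edge_limit:
  "s \<in> T \<Longrightarrow> \<not> is_successor T le s \<Longrightarrow> \<not> is_root T le s \<Longrightarrow>
    ((s, n), (nth_dn le E s n, n)) \<in> snd H"
  unfolding ray_inflation_def ray_edges0_def snd_conv by blast

lemma snd_induced_cone: "snd (induced H (cone t)) = Restr (snd H) (cone t)"
  using up_subset_carrier unfolding induced_def ray_inflation_def by auto

lemma sym_rtrancl_induced_cone: "sym ((snd (induced H (cone t)))\<^sup>*)"
  by (rule sym_rtrancl) (auto simp: snd_induced_cone sym_def intro: ray_edge_sym)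

lemma cone_row_connected:
  assumes "s \<in> up le t"
  shows "((s, m), (s, n)) \<in> (snd (induced H (cone t)))\<^sup>*"
proof -
  have step: "((s, k), (s, Suc k)) \<in> snd (induced H (cone t))" for k
    using assms up_subset_carrier ray_edge_vertical unfolding snd_induced_cone by blast
  have "((s, 0), (s, k)) \<in> (snd (induced H (cone t)))\<^sup>*" for k
    by (induction k) (auto intro: rtrancl_into_rtrancl step)
  then show ?thesis
    using sym_rtrancl_induced_cone by (meson rtrancl_trans symD)
qed

lemma cone_reaches_from_apex:
  assumes "s \<in> up le t"
  shows "((t, 0), (s, 0)) \<in> (snd (induced H (cone t)))\<^sup>*"
  using assms
proof (induction s rule: wf_induct_rule[OF wf_sdown])
  case (1 s)
  let ?R = "snd (induced H (cone t))"
  have t_le_s: "(t, s) \<in> le" and "s \<in> T" and "t \<in> T"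
    using 1(2) tree_le_carrier unfolding up_def by auto
  have IH: "((t, 0), (u, 0)) \<in> ?R\<^sup>*" if "u \<in> sdown le s" and "(t, u) \<in> le" for u
    using 1(1) that unfolding up_def by blast
  have back_edge: "(x, y) \<in> ?R" if "(y, x) \<in> snd H" and "x \<in> cone t" and "y \<in> cone t" for x y
    using that ray_edge_sym unfolding snd_induced_cone by blast
  show ?case
  proof (cases "s = t")
    case True
    then show ?thesis by simp
  next
    case False
    then have t_below_s: "t \<in> sdown le s"
      using t_le_s unfolding sdown_def by blast
    show ?thesis
    proof (cases "is_successor T le s")
      case True
      define p where "p = pred_of T le s"
      have p: "is_pred T le p s"
        unfolding p_def by (rule pred_of_is_pred[OF True])
      then have "p \<in> sdown le s"
        unfolding is_pred_def by blast
      have "(t, p) \<in> le"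
      proof -
        have "(t, p) \<in> le \<or> (p, t) \<in> le"
          using comparable_below_common t_le_s \<open>p \<in> sdown le s\<close> unfolding sdown_def by blast
        moreover have "p \<notin> sdown le t"
          using p t_below_s \<open>t \<in> T\<close> unfolding is_pred_def by blast
        ultimately show ?thesis
          using tree_refl[OF \<open>t \<in> T\<close>] unfolding sdown_def by blast
      qed
      then have "((t, 0), (p, 0)) \<in> ?R\<^sup>*"
        using IH \<open>p \<in> sdown le s\<close> by blast
      moreover have "((p, 0), (s, 0)) \<in> ?R"
        using back_edge[OF ray_edge_pred[OF \<open>s \<in> T\<close> True]] \<open>(t, p) \<in> le\<close> t_le_s
        unfolding p_def up_def by blast
      ultimately show ?thesis
        by (rule rtrancl_into_rtrancl)
    next
      case False
      have "\<not> is_root T le s"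
        using t_below_s \<open>t \<in> T\<close> unfolding is_root_def sdown_def by blast
      obtain u where u: "u \<in> down_nbrs le E s" and "(t, u) \<in> le"
        using sparse \<open>s \<in> T\<close> t_below_s unfolding sparse_def T_graph_def by blast
      then obtain n where n: "nth_dn le E s n = u"
        using bij_betw_imp_surj_on[OF nth_dn_bij[OF \<open>s \<in> T\<close> False \<open>\<not> is_root T le s\<close>]]
        by (metis imageE)
      have "u \<in> sdown le s"
        using u unfolding down_nbrs_def by blast
      have "((t, 0), (u, 0)) \<in> ?R\<^sup>*"
        using IH \<open>u \<in> sdown le s\<close> \<open>(t, u) \<in> le\<close> by blast
      also have "((u, 0), (u, n)) \<in> ?R\<^sup>*"
        using cone_row_connected \<open>(t, u) \<in> le\<close> unfolding up_def by blast
      also have "((u, n), (s, n)) \<in> ?R\<^sup>*"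
        using back_edge[OF ray_edge_limit[OF \<open>s \<in> T\<close> False \<open>\<not> is_root T le s\<close>, of n]]
          n \<open>(t, u) \<in> le\<close> t_le_s unfolding up_def by blast
      also have "((s, n), (s, 0)) \<in> ?R\<^sup>*"
        using cone_row_connected 1(2) by blast
      finally show ?thesis .
    qed
  qed
qed

lemma cone_connected:
  assumes "x \<in> cone t" and "y \<in> cone t"
  shows "(x, y) \<in> (snd (induced H (cone t)))\<^sup>*"
proof -
  obtain s m s' n where x: "x = (s, m)" "s \<in> up le t" and y: "y = (s', n)" "s' \<in> up le t"
    using assms by auto
  have "((s, m), (s, 0)) \<in> (snd (induced H (cone t)))\<^sup>*"
    using cone_row_connected x(2) .
  also have "((s, 0), (t, 0)) \<in> (snd (induced H (cone t)))\<^sup>*"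
    using cone_reaches_from_apex[OF x(2)] sym_rtrancl_induced_cone by (rule symD[rotated])
  also have "((t, 0), (s', 0)) \<in> (snd (induced H (cone t)))\<^sup>*"
    using cone_reaches_from_apex[OF y(2)] .
  also have "((s', 0), (s', n)) \<in> (snd (induced H (cone t)))\<^sup>*"
    using cone_row_connected y(2) .
  finally show ?thesis
    using x y by simp
qed

lemma inj_on_cone: "inj_on cone T"
proof (rule inj_onI)
  fix t t' assume "t \<in> T" "t' \<in> T" and "cone t = cone t'"
  then have "up le t = up le t'"
    by (auto simp: times_eq_iff)
  then show "t = t'"
    using tree_refl tree_antisym \<open>t \<in> T\<close> \<open>t' \<in> T\<close> unfolding up_def by blast
qed

lemma vertices_delete_below_level:
  assumes "Well_order i"
  shows "fst (delete H (below_level T le i \<times> UNIV)) = (\<Union>t\<in>level T le i. cone t)"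
  using carrier_Diff_below_level[OF assms] unfolding fst_delete by (auto simp: ray_inflation_def)

lemma bij_betw_cones_components_delete_below_level:
  assumes "Well_order i"
  defines "G \<equiv> delete H (below_level T le i \<times> UNIV)"
  shows "bij_betw (\<lambda>t. induced G (cone t)) (level T le i) (components G)"
proof (rule bij_betw_components)
  have edges: "Restr (snd G) (fst G) = Restr (snd H) (fst G)"
    unfolding G_def by (auto simp: snd_delete fst_delete)
  show vertices: "fst G = (\<Union>t\<in>level T le i. cone t)"
    unfolding G_def using vertices_delete_below_level[OF assms(1)] .
  fix t assume t: "t \<in> level T le i"
  then show "cone t \<noteq> {}"
    using tree_refl unfolding level_def up_def by blast
  show "y \<in> cone t" if "x \<in> cone t" and xy: "(x, y) \<in> Restr (snd G) (fst G)" for x y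
  proof -
    have "fst y \<notin> below_level T le i"
      using xy unfolding G_def fst_delete by (cases y) auto
    then show ?thesis
      using that ray_edge_leaving_cone sdown_subset_below_level[OF t] unfolding edges by blast
  qed
  show "(x, y) \<in> (Restr (snd G) (fst G))\<^sup>*" if "x \<in> cone t" and "y \<in> cone t" for x y
  proof -
    have "snd (induced H (cone t)) \<subseteq> Restr (snd G) (fst G)"
      using t vertices unfolding snd_induced_cone edges by blast
    then show ?thesis
      using cone_connected[OF that] rtrancl_mono by blast
  qed
next
  show "inj_on cone (level T le i)"
    by (rule inj_on_subset[OF inj_on_cone]) (auto simp: level_def)
qed

end

theorem lemma6p3:
  fixes T :: "'a set" and le :: "'a rel" and E :: "'a rel" and i :: "'b rel"
  assumes "order_tree T le"
    and "height_le_omega1 T le"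
    and "sparse T le E"
    and "Well_order i"
    and "(i, cardSuc natLeq) \<in> ordLess"
  shows "bij_betw (\<lambda>t. induced (ray_inflation T le E) (up le t \<times> UNIV))
           (level T le i)
           (components (delete (ray_inflation T le E) (below_level T le i \<times> UNIV)))"
proof -
  interpret sparse_tree T le E
    using assms(1,3) by unfold_locales
  have "induced (delete H (below_level T le i \<times> UNIV)) (cone t) = induced H (cone t)"
    if "t \<in> level T le i" for t
  proof (rule induced_delete)
    show "cone t \<subseteq> fst H - below_level T le i \<times> UNIV"
      using that vertices_delete_below_level[OF assms(4)] unfolding fst_delete by blast
  qed
  then have "bij_betw (\<lambda>t. induced (delete H (below_level T le i \<times> UNIV)) (cone t)) (level T le i) X
      = bij_betw (\<lambda>t. induced H (cone t)) (level T le i) X" for X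
    by (rule bij_betw_cong)
  then show ?thesis
    using bij_betw_cones_components_delete_below_level[OF assms(4)] by simp
qed

end
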